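(* Let $m>0$ and let $f:\mathbb R^d\to\mathbb R$ be continuously differentiable and $m$-strongly convex with minimizer $x^\star$ (no Lipschitz assumption on $\nabla f$ is required). Let $\bar b>0$ and let $x(t)$, $t\ge0$, solve $\ddot x+\bar b\sqrt m\,\dot x+\nabla f(x)=0$. Set $$\bar\Xi(\bar r,\bar b)=\bar r\bar b^2-2(\bar r^2+1)\bar b+\bar r^3+3\bar r.$$ Then there is a unique real $\bar r$ with $\bar\Xi(\bar r,\bar b)=0$; it satisfies $0<\bar r\le1$, with $\bar r=1$ if and only if $\bar b=2$. Let $\lambda=\sqrt m\,\bar r$ and $v=\dot x/\sqrt m$. Then the function $$t\mapsto e^{\lambda t}\Big(f(x(t))-f(x^\star)+\tfrac m2\big\|v(t)+\bar r(x(t)-x^\star)\big\|^2\Big)$$ is nonincreasing on $[0,\infty)$; consequently $f(x(t))-f(x^\star)\le\bar Ce^{-\lambda t}$ with $$\bar C=f(x(0))-f(x^\star)+\frac m2\Big\|\frac1{\sqrt m}\dot x(0)+\bar r(x(0)-x^\star)\Big\|^2.$$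
   Context: $f$ is $m$-strongly convex if $f(y)\ge f(x)+\nabla f(x)^T(y-x)+\frac m2\|y-x\|^2$ for all $x,y$. The quadratic term equals $(\xi-\xi^\star)^T(\widehat{\bar P}\otimes I_d)(\xi-\xi^\star)$ with $\xi=(v,x)$, $\xi^\star=(0,x^\star)$, $\widehat{\bar P}=\frac m2\begin{pmatrix}1&\bar r\\ \bar r&\bar r^2\end{pmatrix}$. *)

theory Defs
  imports "HOL-Analysis.Analysis"
begin

definition strongly_convex_grad :: "real \<Rightarrow> ('a::real_inner \<Rightarrow> real) \<Rightarrow> ('a \<Rightarrow> 'a) \<Rightarrow> bool" where
  "strongly_convex_grad m f g \<longleftrightarrow>
     (\<forall>x y. f y \<ge> f x + g x \<bullet> (y - x) + m / 2 * (norm (y - x))\<^sup>2)"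

definition Xi_bar :: "real \<Rightarrow> real \<Rightarrow> real" where
  "Xi_bar r b = r * b\<^sup>2 - 2 * (r\<^sup>2 + 1) * b + r ^ 3 + 3 * r"

end

theory Submission
  imports Defs
begin

text \<open>Put \<open>c = sqrt m\<close>, \<open>e = x - xs\<close>, \<open>v = x'/c\<close> and
  \<open>E = f x - f xs + c\<^sup>2/2 \<parallel>v + r e\<parallel>\<^sup>2\<close>. Along a trajectory, the equation of motion and strong
  convexity bound \<open>c r E + E'\<close> by \<open>c\<^sup>3\<close> times a quadratic form in \<open>(e, v)\<close> whose discriminant
  is \<open>r \<Xi>(r, b)\<close>. For the root \<open>r\<close> of \<open>\<Xi>\<close> the form is therefore negative semidefinite, so
  \<open>exp (c r t) E t\<close> is nonincreasing, and \<open>f x - f xs \<le> E\<close> gives the rate.\<close>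

lemma Xi_bar_eq_sum_squares: "r * Xi_bar r b = (r*b - r^2 - 1)^2 + r^2 - 1"
  unfolding Xi_bar_def by (simp add: power2_eq_square power3_eq_cube algebra_simps)

lemma Xi_bar_diff: "Xi_bar s b - Xi_bar r b = (s - r) * ((b - s - r)^2 - s*r + 3)"
  unfolding Xi_bar_def by (simp add: power2_eq_square power3_eq_cube algebra_simps)

lemma Xi_bar_root_bounds:
  assumes "Xi_bar r b = 0" "b > 0"
  shows "0 < r" "r \<le> 1"
proof -
  have "Xi_bar r b = r * (r - b)^2 + 3*r - 2*b"
    unfolding Xi_bar_def by (simp add: power2_eq_square power3_eq_cube algebra_simps)
  then show "0 < r"
    using assms by (smt (verit) mult_nonpos_nonneg zero_le_power2)
  have "r * Xi_bar r b = 0" using assms by simp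
  then have "r^2 \<le> 1" unfolding Xi_bar_eq_sum_squares by (smt (verit) zero_le_power2)
  then show "r \<le> 1" by (metis abs_le_D1 abs_square_le_1)
qed

lemma Xi_bar_root_unique:
  assumes "Xi_bar r b = 0" "Xi_bar s b = 0" "b > 0"
  shows "r = s"
proof -
  have "s * r \<le> 1"
    using Xi_bar_root_bounds[OF assms(1,3)] Xi_bar_root_bounds[OF assms(2,3)] by (simp add: mult_le_one)
  then have "(b - s - r)^2 - s*r + 3 > 0" by (smt (verit) zero_le_power2)
  moreover have "(s - r) * ((b - s - r)^2 - s*r + 3) = 0"
    using Xi_bar_diff[of s b r] assms by simp
  ultimately show ?thesis by simp
qed

lemma Xi_bar_one: "Xi_bar 1 b = (b - 2)^2"
  by (simp add: Xi_bar_def power2_eq_square algebra_simps)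

lemma Xi_bar_root_exists:
  assumes "b > 0"
  shows "\<exists>r. Xi_bar r b = 0"
proof -
  have "continuous_on {0..1} (\<lambda>r. Xi_bar r b)" unfolding Xi_bar_def by (intro continuous_intros)
  moreover have "Xi_bar 0 b \<le> 0" using assms by (simp add: Xi_bar_def)
  moreover have "Xi_bar 1 b \<ge> 0" by (simp add: Xi_bar_one)
  ultimately show ?thesis using IVT'[of "\<lambda>r. Xi_bar r b" 0 0 1] by auto
qed

lemma Xi_bar_root_eq_one_iff:
  assumes "Xi_bar r b = 0" "b > 0"
  shows "r = 1 \<longleftrightarrow> b = 2"
  using Xi_bar_root_unique[OF assms(1) _ assms(2), of 1] assms(1) by (auto simp: Xi_bar_one)

lemma inner_le_of_discriminant:
  fixes e v :: "'a::real_inner"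
  assumes p: "p \<ge> 0" and q: "q \<ge> 0" and discr: "B^2 = 4*p*q"
  shows "B * (e \<bullet> v) \<le> p * (e \<bullet> e) + q * (v \<bullet> v)"
proof (cases "p = 0")
  case True
  then show ?thesis using discr q by simp
next
  case False
  have "0 \<le> (p *\<^sub>R e - (B/2) *\<^sub>R v) \<bullet> (p *\<^sub>R e - (B/2) *\<^sub>R v)" by simp
  also have "\<dots> = p * (p * (e \<bullet> e) - B * (e \<bullet> v) + q * (v \<bullet> v))"
    using discr by (simp add: inner_diff_left inner_diff_right inner_commute power2_eq_square algebra_simps)
  finally show ?thesis using p False by (simp add: zero_le_mult_iff)
qed

lemma Xi_bar_root_quadratic_form_nonpos:
  fixes e v :: "'a::real_inner"
  assumes xi: "Xi_bar r b = 0" and b: "b > 0"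
  shows "(r^3 - r)/2 * (e \<bullet> e) + (3*r/2 - b) * (v \<bullet> v) + (2*r^2 - r*b) * (e \<bullet> v) \<le> 0"
proof -
  note r = Xi_bar_root_bounds[OF xi b]
  define p where "p = (r - r^3)/2"
  define q where "q = b - 3*r/2"
  define B where "B = 2*r^2 - r*b"
  have p: "p \<ge> 0" unfolding p_def using r by (simp add: power3_eq_cube mult_le_one)
  have "B^2 - 4*p*q = r * Xi_bar r b" unfolding B_def p_def q_def Xi_bar_def
    by (simp add: power2_eq_square power3_eq_cube field_simps)
  then have discr: "B^2 = 4*p*q" using xi by simp
  have q: "q \<ge> 0"
  proof (cases "p = 0")
    case True
    then have "r = 1" unfolding p_def using r by (auto simp: power3_eq_cube square_eq_1_iff)
    then show ?thesis unfolding q_def using Xi_bar_root_eq_one_iff[OF xi b] by simp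
  next
    case False
    then show ?thesis using p discr by (smt (verit) zero_le_power2 mult_pos_neg)
  qed
  show ?thesis
    using inner_le_of_discriminant[OF p q discr, of e v] unfolding p_def q_def B_def
    by (simp add: field_simps)
qed

lemma Xi_bar_root_lyapunov_rate:
  fixes e v G :: "'a::real_inner"
  assumes c: "c > 0" and xi: "Xi_bar r b = 0" and b: "b > 0"
    and F: "F \<le> G \<bullet> e - c^2/2 * (norm e)\<^sup>2"
  shows "c*r * (F + c^2/2 * (norm (v + r *\<^sub>R e))\<^sup>2)
           + (c * (G \<bullet> v) + c^2 * ((((r - b) * c) *\<^sub>R v - (1/c) *\<^sub>R G) \<bullet> (v + r *\<^sub>R e))) \<le> 0"
proof -
  let ?Q = "(r^3 - r)/2 * (e \<bullet> e) + (3*r/2 - b) * (v \<bullet> v) + (2*r^2 - r*b) * (e \<bullet> v)"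
  have "c*r * (F + c^2/2 * (norm (v + r *\<^sub>R e))\<^sup>2)
           + (c * (G \<bullet> v) + c^2 * ((((r - b) * c) *\<^sub>R v - (1/c) *\<^sub>R G) \<bullet> (v + r *\<^sub>R e)))
        = c^3 * ?Q + c*r * (F - G \<bullet> e + c^2/2 * (norm e)\<^sup>2)"
    unfolding power2_norm_eq_inner using c by (simp add: inner_add_left inner_add_right inner_diff_left
        inner_commute[of e v] power2_eq_square power3_eq_cube field_simps)
  moreover have "c^3 * ?Q \<le> 0"
    using Xi_bar_root_quadratic_form_nonpos[OF xi b, of e v] c by (simp add: mult_nonneg_nonpos)
  moreover have "c*r * (F - G \<bullet> e + c^2/2 * (norm e)\<^sup>2) \<le> 0"
    using F c Xi_bar_root_bounds[OF xi b] by (simp add: mult_nonneg_nonpos)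
  ultimately show ?thesis by linarith
qed

lemma strongly_convex_grad_gap_le:
  assumes "strongly_convex_grad m f g"
  shows "f x - f y \<le> g x \<bullet> (x - y) - m/2 * (norm (x - y))\<^sup>2"
proof -
  have "f y \<ge> f x + g x \<bullet> (y - x) + m/2 * (norm (y - x))\<^sup>2"
    using assms unfolding strongly_convex_grad_def by blast
  moreover have "g x \<bullet> (y - x) = - (g x \<bullet> (x - y))" "norm (y - x) = norm (x - y)"
    by (simp_all add: inner_diff_right norm_minus_commute)
  ultimately show ?thesis by simp
qed

lemma has_real_derivative_norm_power2:
  fixes w :: "real \<Rightarrow> 'a::real_inner"
  assumes "(w has_vector_derivative w') (at t within S)"
  shows "((\<lambda>t. (norm (w t))\<^sup>2) has_real_derivative 2 * (w' \<bullet> w t)) (at t within S)"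
proof -
  have "((\<lambda>t. w t \<bullet> w t) has_derivative (\<lambda>h. w t \<bullet> (h *\<^sub>R w') + (h *\<^sub>R w') \<bullet> w t)) (at t within S)"
    using assms[unfolded has_vector_derivative_def] assms[unfolded has_vector_derivative_def]
    by (rule has_derivative_inner)
  then show ?thesis unfolding has_field_derivative_def power2_norm_eq_inner
    by (rule has_derivative_eq_rhs) (auto simp: inner_commute algebra_simps)
qed

lemma has_real_derivative_comp_gradient:
  fixes f :: "'a::real_inner \<Rightarrow> real"
  assumes grad: "(f has_derivative (\<lambda>h. G \<bullet> h)) (at (x t))"
    and dx: "(x has_vector_derivative x') (at t within S)"
  shows "((\<lambda>t. f (x t)) has_real_derivative (G \<bullet> x')) (at t within S)"
proof -
  have "((f \<circ> x) has_derivative ((\<lambda>h. G \<bullet> h) \<circ> (\<lambda>h. h *\<^sub>R x'))) (at t within S)"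
    using dx[unfolded has_vector_derivative_def] has_derivative_at_withinI[OF grad]
    by (rule diff_chain_within)
  then show ?thesis unfolding has_field_derivative_def comp_def
    by (rule has_derivative_eq_rhs) (auto simp: fun_eq_iff)
qed

lemma antimono_on_Ici_if_derivative_nonpos:
  fixes \<phi> :: "real \<Rightarrow> real"
  assumes deriv: "\<And>t. a \<le> t \<Longrightarrow> (\<phi> has_real_derivative \<phi>' t) (at t within {a..})"
    and nonpos: "\<And>t. a \<le> t \<Longrightarrow> \<phi>' t \<le> 0"
  shows "antimono_on {a..} \<phi>"
proof -
  have cont: "continuous_on {a..} \<phi>"
    unfolding continuous_on_eq_continuous_within using deriv DERIV_continuous by blast
  have "\<phi> t \<le> \<phi> s" if "a \<le> s" "s \<le> t" for s t
  proof (rule DERIV_nonpos_imp_decreasing_open[OF \<open>s \<le> t\<close>])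
    fix u assume "s < u" "u < t"
    then have "at u within {a..} = at u"
      using \<open>a \<le> s\<close> by (intro at_within_interior) (simp add: interior_Ici[of "a - 1"])
    then show "\<exists>y. (\<phi> has_real_derivative y) (at u) \<and> y \<le> 0"
      using deriv[of u] nonpos[of u] \<open>a \<le> s\<close> \<open>s < u\<close> by auto
  next
    show "continuous_on {s..t} \<phi>" using cont by (rule continuous_on_subset) (use that in auto)
  qed
  then show ?thesis unfolding monotone_on_def by auto
qed

lemma heavy_ball_energy_has_derivative:
  fixes f :: "'a::real_inner \<Rightarrow> real" and x x' x'' :: "real \<Rightarrow> 'a"
  assumes c: "c > 0"
    and grad: "(f has_derivative (\<lambda>h. g (x t) \<bullet> h)) (at (x t))"
    and dx: "(x has_vector_derivative x' t) (at t within S)"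
    and ddx: "(x' has_vector_derivative x'' t) (at t within S)"
    and ode: "x'' t + (b*c) *\<^sub>R x' t + g (x t) = 0"
  shows "((\<lambda>s. f (x s) - f xs + c^2/2 * (norm ((1/c) *\<^sub>R x' s + r *\<^sub>R (x s - xs)))\<^sup>2)
    has_real_derivative c * (g (x t) \<bullet> ((1/c) *\<^sub>R x' t))
      + c^2 * ((((r - b) * c) *\<^sub>R ((1/c) *\<^sub>R x' t) - (1/c) *\<^sub>R g (x t))
               \<bullet> ((1/c) *\<^sub>R x' t + r *\<^sub>R (x t - xs)))) (at t within S)"
proof -
  let ?w = "\<lambda>s. (1/c) *\<^sub>R x' s + r *\<^sub>R (x s - xs)"
  have x'': "x'' t = - ((b*c) *\<^sub>R x' t + g (x t))"
    using ode unfolding add.assoc add_eq_0_iff2 .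
  have "(?w has_vector_derivative (1/c) *\<^sub>R x'' t + r *\<^sub>R x' t) (at t within S)"
    by (auto intro!: derivative_eq_intros dx ddx)
  also have "(1/c) *\<^sub>R x'' t + r *\<^sub>R x' t
      = ((r - b) * c) *\<^sub>R ((1/c) *\<^sub>R x' t) - (1/c) *\<^sub>R g (x t)"
    unfolding x'' using c by (simp add: algebra_simps)
  finally have "((\<lambda>s. (norm (?w s))\<^sup>2) has_real_derivative
      2 * ((((r - b) * c) *\<^sub>R ((1/c) *\<^sub>R x' t) - (1/c) *\<^sub>R g (x t)) \<bullet> ?w t)) (at t within S)"
    by (rule has_real_derivative_norm_power2)
  from DERIV_add[OF DERIV_diff[OF has_real_derivative_comp_gradient[OF grad dx] DERIV_const]
      DERIV_cmult[OF this, of "c^2/2"]]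
  show ?thesis using c by simp
qed

lemma heavy_ball_lyapunov_antimono:
  fixes f :: "'a::real_inner \<Rightarrow> real" and x x' x'' :: "real \<Rightarrow> 'a"
  assumes c: "c > 0" and xi: "Xi_bar r b = 0" and b: "b > 0"
    and grad: "\<And>y. (f has_derivative (\<lambda>h. g y \<bullet> h)) (at y)"
    and sconv: "strongly_convex_grad (c^2) f g"
    and dx: "\<And>t. t \<ge> 0 \<Longrightarrow> (x has_vector_derivative x' t) (at t within {0..})"
    and ddx: "\<And>t. t \<ge> 0 \<Longrightarrow> (x' has_vector_derivative x'' t) (at t within {0..})"
    and ode: "\<And>t. t \<ge> 0 \<Longrightarrow> x'' t + (b*c) *\<^sub>R x' t + g (x t) = 0"
  shows "antimono_on {0..} (\<lambda>t. exp (c*r*t) *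
           (f (x t) - f xs + c^2/2 * (norm ((1/c) *\<^sub>R x' t + r *\<^sub>R (x t - xs)))\<^sup>2))"
proof -
  define E where "E t = f (x t) - f xs + c^2/2 * (norm ((1/c) *\<^sub>R x' t + r *\<^sub>R (x t - xs)))\<^sup>2"
    for t
  define E' where "E' t = c * (g (x t) \<bullet> ((1/c) *\<^sub>R x' t))
      + c^2 * ((((r - b) * c) *\<^sub>R ((1/c) *\<^sub>R x' t) - (1/c) *\<^sub>R g (x t))
               \<bullet> ((1/c) *\<^sub>R x' t + r *\<^sub>R (x t - xs)))" for t
  have E: "(E has_real_derivative E' t) (at t within {0..})" if "t \<ge> 0" for t
    unfolding E_def[abs_def] E'_def
    by (rule heavy_ball_energy_has_derivative[where x = x and x' = x' and x'' = x'' and g = g and t = t, OF c grad dx[OF that] ddx[OF that] ode[OF that]])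
  have rate: "c*r * E t + E' t \<le> 0" for t
    unfolding E_def E'_def
    by (rule Xi_bar_root_lyapunov_rate[OF c xi b strongly_convex_grad_gap_le[OF sconv]])
  have "antimono_on {0..} (\<lambda>t. exp (c*r*t) * E t)"
  proof (rule antimono_on_Ici_if_derivative_nonpos)
    fix t :: real assume "0 \<le> t"
    show "((\<lambda>t. exp (c*r*t) * E t) has_real_derivative exp (c*r*t) * (c*r * E t + E' t))
        (at t within {0..})"
      by (auto intro!: derivative_eq_intros E \<open>0 \<le> t\<close> simp: algebra_simps)
    show "exp (c*r*t) * (c*r * E t + E' t) \<le> 0"
      using rate by (simp add: mult_nonneg_nonpos)
  qed
  then show ?thesis unfolding E_def .
qed

lemma antimono_on_exp_weighted_le:
  fixes E :: "real \<Rightarrow> real"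
  assumes "antimono_on {0..} (\<lambda>t. exp (k * t) * E t)" "t \<ge> 0"
  shows "E t \<le> E 0 * exp (- k * t)"
proof -
  have "exp (k * t) * E t \<le> E 0"
    using assms unfolding monotone_on_def by fastforce
  then show ?thesis by (simp add: exp_minus field_simps)
qed

theorem theorem5:
  fixes f :: "'a::euclidean_space \<Rightarrow> real" and g :: "'a \<Rightarrow> 'a"
    and m b :: real and xs :: 'a
    and x x' x'' :: "real \<Rightarrow> 'a"
  assumes m_pos: "m > 0"
    and grad: "\<And>y. (f has_derivative (\<lambda>h. g y \<bullet> h)) (at y)"
    and grad_cont: "continuous_on UNIV g"
    and sconv: "strongly_convex_grad m f g"
    and minimizer: "\<And>y. f xs \<le> f y"
    and b_pos: "b > 0"
    and dx: "\<And>t. t \<ge> 0 \<Longrightarrow> (x has_vector_derivative x' t) (at t within {0..})"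
    and ddx: "\<And>t. t \<ge> 0 \<Longrightarrow> (x' has_vector_derivative x'' t) (at t within {0..})"
    and ode: "\<And>t. t \<ge> 0 \<Longrightarrow> x'' t + (b * sqrt m) *\<^sub>R x' t + g (x t) = 0"
  shows "(\<exists>!r. Xi_bar r b = 0) \<and>
    (\<forall>r. Xi_bar r b = 0 \<longrightarrow>
       0 < r \<and> r \<le> 1 \<and> (r = 1 \<longleftrightarrow> b = 2) \<and>
       (let lam = sqrt m * r;
            v = (\<lambda>t. (1 / sqrt m) *\<^sub>R x' t);
            C = f (x 0) - f xs + m / 2 * (norm ((1 / sqrt m) *\<^sub>R x' 0 + r *\<^sub>R (x 0 - xs)))\<^sup>2
        in antimono_on {0..} (\<lambda>t. exp (lam * t) *
               (f (x t) - f xs + m / 2 * (norm (v t + r *\<^sub>R (x t - xs)))\<^sup>2))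
           \<and> (\<forall>t\<ge>0. f (x t) - f xs \<le> C * exp (- lam * t))))"
proof (intro conjI allI impI)
  show "\<exists>!r. Xi_bar r b = 0"
    using Xi_bar_root_exists[OF b_pos] Xi_bar_root_unique[OF _ _ b_pos] by blast
next
  fix r assume xi: "Xi_bar r b = 0"
  show "0 < r" "r \<le> 1" by (fact Xi_bar_root_bounds[OF xi b_pos])+
  show "r = 1 \<longleftrightarrow> b = 2" by (fact Xi_bar_root_eq_one_iff[OF xi b_pos])
  have c: "sqrt m > 0" and m: "(sqrt m)\<^sup>2 = m" using m_pos by simp_all
  define E where "E t = f (x t) - f xs + m/2 * (norm ((1 / sqrt m) *\<^sub>R x' t + r *\<^sub>R (x t - xs)))\<^sup>2"
    for t
  have anti: "antimono_on {0..} (\<lambda>t. exp (sqrt m * r * t) * E t)"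
    using heavy_ball_lyapunov_antimono[OF c xi b_pos grad _ dx ddx ode] sconv
    unfolding E_def m by simp
  have "f (x t) - f xs \<le> E t" for t
    unfolding E_def using m_pos by simp
  then have "\<forall>t\<ge>0. f (x t) - f xs \<le> E 0 * exp (- (sqrt m * r) * t)"
    using antimono_on_exp_weighted_le[OF anti] order_trans by blast
  with anti show "let lam = sqrt m * r;
            v = (\<lambda>t. (1 / sqrt m) *\<^sub>R x' t);
            C = f (x 0) - f xs + m / 2 * (norm ((1 / sqrt m) *\<^sub>R x' 0 + r *\<^sub>R (x 0 - xs)))\<^sup>2
        in antimono_on {0..} (\<lambda>t. exp (lam * t) *
               (f (x t) - f xs + m / 2 * (norm (v t + r *\<^sub>R (x t - xs)))\<^sup>2))
           \<and> (\<forall>t\<ge>0. f (x t) - f xs \<le> C * exp (- lam * t))"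
    unfolding Let_def E_def by simp
qed

end
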